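(* For every integer $n\ge 2$, let $a_o$ (resp. $a_e$) be the total number of odd (resp. even) parts, counted with multiplicity, over all partitions in $\mathcal{H}_n$. Then $$a_o=(n+2)\cdot 2^{n-3}\qquad\text{and}\qquad a_e=n\cdot 2^{n-3}.$$
   Context: A partition is a finite nonempty weakly decreasing sequence $\lambda=(\lambda_1,\ldots,\lambda_k)$ of positive integers; $\ell(\lambda)=k$. The perimeter is $\Gamma(\lambda)=\lambda_1+\ell(\lambda)-1$; $\mathcal{H}_n$ is the set of partitions with perimeter $n$. *)

theory Defs
  imports Complex_Main
begin

definition is_partition :: "nat list \<Rightarrow> bool" where
  "is_partition la \<longleftrightarrow> la \<noteq> [] \<and> sorted_wrt (\<ge>) la \<and> (\<forall>x\<in>set la. 0 < x)"

definition perimeter :: "nat list \<Rightarrow> nat" where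
  "perimeter la = hd la + length la - 1"

definition H :: "nat \<Rightarrow> nat list set" where
  "H n = {la. is_partition la \<and> perimeter la = n}"

definition a_odd :: "nat \<Rightarrow> nat" where
  "a_odd n = (\<Sum>la\<in>H n. length (filter odd la))"

definition a_even :: "nat \<Rightarrow> nat" where
  "a_even n = (\<Sum>la\<in>H n. length (filter even la))"

end

theory Submission
  imports Defs
begin

text \<open>For \<open>n \<ge> 1\<close>, every partition of perimeter \<open>n + 1\<close> arises in exactly one way from
  a partition \<open>\<mu>\<close> of perimeter \<open>n\<close>: either by repeating the largest part of \<open>\<mu>\<close> or by
  increasing it by one. Hence \<open>|\<H>\<^sub>n| = 2^(n-1)\<close>, and since only the second operation flips
  the parity of the largest part, for \<open>n \<ge> 2\<close> exactly half of the partitions in \<open>\<H>\<^sub>n\<close> have an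
  even largest part. Between them, the two partitions obtained from \<open>\<mu>\<close> contain every part
  of \<open>\<mu>\<close> twice plus one part equal to the largest part of \<open>\<mu>\<close> plus one, so
  \<open>a\<^sub>o(n + 1) = 2 a\<^sub>o(n) + 2^(n-2)\<close>, and likewise for \<open>a\<^sub>e\<close>; the closed forms follow by
  induction from \<open>n = 2\<close>.\<close>

definition repeat_first :: "nat list \<Rightarrow> nat list" where
  "repeat_first la = hd la # la"

definition incr_first :: "nat list \<Rightarrow> nat list" where
  "incr_first la = Suc (hd la) # tl la"

lemma H_not_Nil: "la \<in> H n \<Longrightarrow> la \<noteq> []"
  by (simp add: H_def is_partition_def)

lemma Cons_in_H_iff:
  "x # xs \<in> H n \<longleftrightarrow>
     0 < x \<and> (\<forall>y\<in>set xs. 0 < y \<and> y \<le> x) \<and> sorted_wrt (\<ge>) xs \<and> x + length xs = n"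
  by (auto simp: H_def is_partition_def perimeter_def)

lemma repeat_first_in_H: "la \<in> H n \<Longrightarrow> repeat_first la \<in> H (Suc n)"
  by (cases la) (auto simp: repeat_first_def Cons_in_H_iff dest: H_not_Nil)

lemma incr_first_in_H: "la \<in> H n \<Longrightarrow> incr_first la \<in> H (Suc n)"
  by (cases la) (auto simp: incr_first_def Cons_in_H_iff le_Suc_eq dest: H_not_Nil)

lemma H_Suc_subset:
  assumes "1 \<le> n" "la \<in> H (Suc n)"
  shows "la \<in> repeat_first ` H n \<union> incr_first ` H n"
proof -
  obtain x xs where la: "la = x # xs"
    using assms(2) H_not_Nil by (cases la) auto
  have hyps: "0 < x" "\<forall>y\<in>set xs. 0 < y \<and> y \<le> x" "sorted_wrt (\<ge>) xs" "x + length xs = Suc n"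
    using assms(2) by (simp_all add: la Cons_in_H_iff)
  show ?thesis
  proof (cases "xs \<noteq> [] \<and> hd xs = x")
    case True
    then obtain ys where "xs = x # ys"
      by (cases xs) auto
    with hyps have "xs \<in> H n" and "la = repeat_first xs"
      by (simp_all add: la Cons_in_H_iff repeat_first_def)
    then show ?thesis
      by blast
  next
    case False
    have below: "\<forall>y\<in>set xs. y < x"
      using False hyps(2,3) by (cases xs) fastforce+
    have "2 \<le> x"
    proof (cases xs)
      case Nil
      then show ?thesis using hyps(4) assms(1) by simp
    next
      case (Cons y ys)
      then show ?thesis using below hyps(2) by fastforce
    qed
    with hyps below have "(x - 1) # xs \<in> H n" and "la = incr_first ((x - 1) # xs)"
      by (auto simp: la Cons_in_H_iff incr_first_def)
    then show ?thesis
      by blast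
  qed
qed

lemma H_Suc: "1 \<le> n \<Longrightarrow> H (Suc n) = repeat_first ` H n \<union> incr_first ` H n"
  using H_Suc_subset repeat_first_in_H incr_first_in_H by blast

lemma repeat_first_incr_first_disjoint: "repeat_first ` H n \<inter> incr_first ` H n = {}"
proof -
  have "repeat_first la \<noteq> incr_first mu" if "la \<in> H n" "mu \<in> H n" for la mu
    using H_not_Nil[OF that(1)] H_not_Nil[OF that(2)] that
    by (auto simp: repeat_first_def incr_first_def neq_Nil_conv Cons_in_H_iff)
  then show ?thesis
    by blast
qed

lemma inj_on_repeat_first: "inj_on repeat_first A"
  by (auto simp: inj_on_def repeat_first_def)

lemma inj_on_incr_first: "inj_on incr_first (H n)"
  by (auto simp: inj_on_def incr_first_def neq_Nil_conv dest!: H_not_Nil)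

lemma H_1: "H 1 = {[1]}"
proof -
  have "la = [1]" if "la \<in> H 1" for la
    using that H_not_Nil[OF that] by (auto simp: neq_Nil_conv Cons_in_H_iff add_is_1)
  then show ?thesis
    by (auto simp: Cons_in_H_iff)
qed

lemma finite_H: "1 \<le> n \<Longrightarrow> finite (H n)"
proof (induction n rule: dec_induct)
  case base
  show ?case by (simp add: H_1 flip: One_nat_def)
next
  case (step n)
  then show ?case by (simp add: H_Suc)
qed

lemma sum_H_Suc:
  assumes "1 \<le> n"
  shows "(\<Sum>la\<in>H (Suc n). f la) = (\<Sum>la\<in>H n. f (repeat_first la) + f (incr_first la))"
proof -
  have "(\<Sum>la\<in>H (Suc n). f la) = sum f (repeat_first ` H n) + sum f (incr_first ` H n)"
    using assms by (simp add: H_Suc sum.union_disjoint finite_H repeat_first_incr_first_disjoint)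
  also have "\<dots> = (\<Sum>la\<in>H n. f (repeat_first la)) + (\<Sum>la\<in>H n. f (incr_first la))"
    by (simp add: sum.reindex inj_on_repeat_first inj_on_incr_first)
  finally show ?thesis
    by (simp add: sum.distrib)
qed

lemma card_H: "1 \<le> n \<Longrightarrow> card (H n) = 2 ^ (n - 1)"
proof (induction n rule: dec_induct)
  case base
  show ?case by (simp add: H_1 flip: One_nat_def)
next
  case (step n)
  have "card (H (Suc n)) = 2 * card (H n)"
    using sum_H_Suc[OF step.hyps(1), of "\<lambda>_. 1 :: nat"] by simp
  with step.IH step.hyps show ?case
    by (cases n) simp_all
qed

lemma card_filter_eq_sum: "finite A \<Longrightarrow> card {x \<in> A. P x} = (\<Sum>x\<in>A. if P x then 1 else 0)"
  unfolding card_eq_sum by (rule sum.inter_filter)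

lemma card_H_Suc_alternating_hd:
  assumes "1 \<le> n" and alternating: "\<And>x. P (Suc x) \<longleftrightarrow> \<not> P x"
  shows "card {la \<in> H (Suc n). P (hd la)} = card (H n)"
proof -
  have "card {la \<in> H (Suc n). P (hd la)} = (\<Sum>la\<in>H (Suc n). if P (hd la) then 1 else 0)"
    using assms(1) by (simp add: card_filter_eq_sum finite_H)
  also have "\<dots> = (\<Sum>la\<in>H n. (if P (hd la) then 1 else 0) + (if P (Suc (hd la)) then 1 else 0))"
    using assms(1) by (simp add: sum_H_Suc repeat_first_def incr_first_def)
  also have "\<dots> = (\<Sum>la\<in>H n. 1)"
    by (rule sum.cong) (simp_all add: alternating)
  also have "\<dots> = card (H n)"
    by simp
  finally show ?thesis .
qed

lemma length_filter_repeat_first_incr_first: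
  assumes "la \<noteq> []"
  shows "length (filter P (repeat_first la)) + length (filter P (incr_first la))
       = 2 * length (filter P la) + (if P (Suc (hd la)) then 1 else 0)"
  using assms by (auto simp: repeat_first_def incr_first_def neq_Nil_conv)

lemma sum_length_filter_H_Suc:
  assumes "1 \<le> n"
  shows "(\<Sum>la\<in>H (Suc n). length (filter P la))
       = 2 * (\<Sum>la\<in>H n. length (filter P la)) + card {la \<in> H n. P (Suc (hd la))}"
  using assms
  by (simp add: sum_H_Suc length_filter_repeat_first_incr_first H_not_Nil sum.distrib
      sum_distrib_left card_filter_eq_sum finite_H cong: sum.cong)

lemma sum_length_filter_H_Suc_alternating:
  assumes "2 \<le> n" and alternating: "\<And>x. P (Suc x) \<longleftrightarrow> \<not> P x"
  shows "(\<Sum>la\<in>H (Suc n). length (filter P la)) = 2 * (\<Sum>la\<in>H n. length (filter P la)) + 2 ^ (n - 2)"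
proof -
  obtain m where n: "n = Suc m" and "1 \<le> m"
    using assms(1) by (cases n) auto
  have "card {la \<in> H n. P (Suc (hd la))} = card {la \<in> H (Suc m). \<not> P (hd la)}"
    by (simp add: n alternating)
  also have "\<dots> = card (H m)"
    using \<open>1 \<le> m\<close> by (rule card_H_Suc_alternating_hd) (simp add: alternating)
  also have "\<dots> = 2 ^ (n - 2)"
    using \<open>1 \<le> m\<close> by (simp add: n card_H)
  finally show ?thesis
    using assms(1) by (simp add: sum_length_filter_H_Suc)
qed

lemma H_2: "H 2 = {[2], [1, 1]}"
  using H_Suc[of 1, unfolded H_1] by (simp add: repeat_first_def incr_first_def numeral_2_eq_2)

lemma a_odd_closed_form: "2 \<le> n \<Longrightarrow> 8 * a_odd n = (n + 2) * 2 ^ n"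
proof (induction n rule: dec_induct)
  case base
  show ?case by (simp add: a_odd_def H_2)
next
  case (step n)
  then have "a_odd (Suc n) = 2 * a_odd n + 2 ^ (n - 2)"
    unfolding a_odd_def by (simp add: sum_length_filter_H_Suc_alternating)
  with step show ?case
    by (auto simp: le_iff_add power_add algebra_simps)
qed

lemma a_even_closed_form: "2 \<le> n \<Longrightarrow> 8 * a_even n = n * 2 ^ n"
proof (induction n rule: dec_induct)
  case base
  show ?case by (simp add: a_even_def H_2)
next
  case (step n)
  then have "a_even (Suc n) = 2 * a_even n + 2 ^ (n - 2)"
    unfolding a_even_def by (simp add: sum_length_filter_H_Suc_alternating)
  with step show ?case
    by (auto simp: le_iff_add power_add algebra_simps)
qed

theorem corollary2p6:
  fixes n :: nat
  assumes "n \<ge> 2"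
  shows "real (a_odd n) = (real n + 2) * 2 powi (int n - 3) \<and>
         real (a_even n) = real n * 2 powi (int n - 3)"
proof -
  have powi_eq: "(2::real) powi (int n - 3) = 2 ^ n / 8"
    by (simp add: power_int_diff)
  have "8 * real (a_odd n) = (real n + 2) * 2 ^ n"
    using arg_cong[where f = real, OF a_odd_closed_form[OF assms]] by (simp add: algebra_simps)
  moreover have "8 * real (a_even n) = real n * 2 ^ n"
    using arg_cong[where f = real, OF a_even_closed_form[OF assms]] by simp
  ultimately show ?thesis
    unfolding powi_eq by (simp add: field_simps)
qed

end
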